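(* Let $V_1,\dots,V_n$ be i.i.d. random vectors in $\mathbb{R}^d$, $\nu=\mathbb{E}[V_i]$ and $\bar V=\frac1n\sum_{i=1}^nV_i$ ($n\ge1$). Let $H>0$ be a constant with $\|V_i-\nu\|_2\le H$ almost surely. Then for all $n\in\mathbb{N}$ and $\delta\in(0,1)$, with probability $1-\delta$, \[ \sum_{i=1}^n\|V_i-\nu\|_2^2\le\sum_{i=1}^n\|V_i-\bar V\|_2^2+2H^2\ln(2/\delta). \] *)

theory Defs
  imports "HOL-Probability.Probability"
begin

end

(*
  Pinelis' argument for Hilbert-space valued martingales. Since w \<mapsto> cosh (sqrt w) is
  convex, for |x| \<le> c the number cosh (l |s + x|) lies below a chord, which is
  cosh (l |s|) cosh (l c) plus a term linear in x. If X is centred and independent of S,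
  that linear term has mean zero, so E cosh (l |S + X|) \<le> cosh (l c) E cosh (l |S|).
  Iterating over the centred summands V_i - \<nu> gives
  E cosh (l |S_n|) \<le> cosh (l H)^n \<le> exp (n l^2 H^2 / 2), and Markov's inequality with
  l = t / (n H^2) yields P (|S_n| > t) \<le> 2 exp (- t^2 / (2 n H^2)). The theorem follows from
  sum_i |V_i - \<nu>|^2 = sum_i |V_i - V_bar|^2 + |S_n|^2 / n.
*)
theory Submission
  imports Defs
begin

lemma power_two_mult_fact_le_fact_double: "2 ^ k * fact k \<le> (fact (2 * k) :: real)"
proof (induction k)
  case 0
  then show ?case by simp
next
  case (Suc k)
  have "(2::real) ^ Suc k * fact (Suc k) = 2 * (real k + 1) * (2 ^ k * fact k)"
    by (simp add: algebra_simps)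
  also have "\<dots> \<le> (2 * real k + 2) * (2 * real k + 1) * fact (2 * k)"
    using Suc by (intro mult_mono) (auto simp: algebra_simps)
  also have "\<dots> = fact (2 * Suc k)"
    by (simp add: algebra_simps)
  finally show ?case .
qed

lemma cosh_sqrt_sums:
  assumes "0 \<le> w"
  shows "(\<lambda>k. w ^ k / fact (2 * k)) sums cosh (sqrt w)"
proof -
  have "(\<lambda>k. if even (2 * k) then sqrt w ^ (2 * k) /\<^sub>R fact (2 * k) else 0) sums cosh (sqrt w)"
    using cosh_converges[of "sqrt w"]
    by (subst sums_mono_reindex[of "\<lambda>n. 2 * n"]) (auto simp: strict_mono_def elim!: oddE)
  then show ?thesis
    using assms by (simp add: power_mult divide_simps)
qed

lemma cosh_le_exp_square_half: "cosh (x::real) \<le> exp (x\<^sup>2 / 2)"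
proof (rule sums_le)
  show "(\<lambda>k. (x\<^sup>2) ^ k / fact (2 * k)) sums cosh x"
    using cosh_sqrt_sums[of "x\<^sup>2"] by simp
  show "(\<lambda>k. (x\<^sup>2 / 2) ^ k /\<^sub>R fact k) sums exp (x\<^sup>2 / 2)"
    by (rule exp_converges)
  have "(x\<^sup>2) ^ k / fact (2 * k) \<le> (x\<^sup>2) ^ k / (2 ^ k * fact k)" for k
    by (intro divide_left_mono power_two_mult_fact_le_fact_double) auto
  then show "(x\<^sup>2) ^ k / fact (2 * k) \<le> (x\<^sup>2 / 2) ^ k /\<^sub>R fact k" for k
    by (simp add: field_simps)
qed

lemma convex_on_cosh_sqrt: "convex_on {0..} (\<lambda>w. cosh (sqrt w))"
proof (rule convex_onI)
  fix t a b :: real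
  assume t: "0 < t" "t < 1" and ab: "a \<in> {0..}" "b \<in> {0..}"
  have power_convex: "convex_on {0..} (\<lambda>w::real. w ^ k)" for k
    by (cases "even k") (auto intro: convex_on_subset convex_power_even convex_power_odd)
  show "cosh (sqrt ((1 - t) *\<^sub>R a + t *\<^sub>R b)) \<le> (1 - t) * cosh (sqrt a) + t * cosh (sqrt b)"
  proof (rule sums_le)
    show "(\<lambda>k. ((1 - t) *\<^sub>R a + t *\<^sub>R b) ^ k / fact (2 * k)) sums cosh (sqrt ((1 - t) *\<^sub>R a + t *\<^sub>R b))"
      using t ab by (intro cosh_sqrt_sums) simp
    show "(\<lambda>k. (1 - t) * (a ^ k / fact (2 * k)) + t * (b ^ k / fact (2 * k))) sums
        ((1 - t) * cosh (sqrt a) + t * cosh (sqrt b))"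
      using ab by (intro sums_add sums_mult cosh_sqrt_sums) auto
    fix k
    have "((1 - t) *\<^sub>R a + t *\<^sub>R b) ^ k \<le> (1 - t) * a ^ k + t * b ^ k"
      using t ab by (intro convex_onD[OF power_convex]) auto
    then show "((1 - t) *\<^sub>R a + t *\<^sub>R b) ^ k / fact (2 * k) \<le>
        (1 - t) * (a ^ k / fact (2 * k)) + t * (b ^ k / fact (2 * k))"
      by (simp add: divide_right_mono add_divide_distrib[symmetric])
  qed
qed simp

definition cosh_norm_slope :: "real \<Rightarrow> real \<Rightarrow> 'b::real_inner \<Rightarrow> 'b" where
  "cosh_norm_slope l c s = (sinh (l * norm s) * sinh (l * c) / (norm s * c)) *\<^sub>R s"

lemma cosh_norm_add_le:
  fixes s x :: "'b::real_inner"
  assumes x: "norm x \<le> c" and c: "0 < c" and l: "0 \<le> l"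
  shows "cosh (l * norm (s + x)) \<le> cosh (l * norm s) * cosh (l * c) + cosh_norm_slope l c s \<bullet> x"
proof (cases "s = 0")
  case True
  have "cosh (l * norm x) \<le> cosh (l * c)"
    using x l c by (subst cosh_real_nonneg_le_iff) (auto intro: mult_left_mono)
  then show ?thesis
    using True by (simp add: cosh_norm_slope_def)
next
  case False
  define r where "r = norm s"
  define p where "p = s \<bullet> x"
  have r: "0 < r"
    using False by (simp add: r_def)
  have p: "\<bar>p\<bar> \<le> r * c"
    unfolding p_def r_def using Cauchy_Schwarz_ineq2[of s x] x
    by (meson mult_left_mono norm_ge_zero order_trans)
  have norm_add: "(norm (s + x))\<^sup>2 = r\<^sup>2 + 2 * p + (norm x)\<^sup>2"
    unfolding r_def p_def by (simp add: power2_norm_eq_inner inner_add algebra_simps inner_commute)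
  \<comment> \<open>Write the bound r^2 + 2 p + c^2 on |s + x|^2 as a convex combination of (r - c)^2 and (r + c)^2;
    the weight t is affine in p = s \<bullet> x.\<close>
  define t where "t = (p + r * c) / (2 * r * c)"
  have t: "0 \<le> t" "t \<le> 1"
    using p r c by (auto simp: t_def field_simps abs_le_iff)
  have chord: "l\<^sup>2 * (r\<^sup>2 + 2 * p + c\<^sup>2) = (1 - t) *\<^sub>R (l * (r - c))\<^sup>2 + t *\<^sub>R (l * (r + c))\<^sup>2"
    using r c by (simp add: t_def field_simps power2_eq_square)
  have "cosh (l * norm (s + x)) = cosh (sqrt (l\<^sup>2 * (norm (s + x))\<^sup>2))"
    using l by (simp add: real_sqrt_mult)
  also have "\<dots> \<le> cosh (sqrt (l\<^sup>2 * (r\<^sup>2 + 2 * p + c\<^sup>2)))"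
  proof -
    have "(norm x)\<^sup>2 \<le> c\<^sup>2"
      using x by (simp add: power_mono)
    moreover have "0 \<le> r\<^sup>2 + 2 * p + (norm x)\<^sup>2"
      using norm_add by (metis zero_le_power2)
    ultimately show ?thesis
      using norm_add l by (subst cosh_real_nonneg_le_iff) (auto intro!: mult_left_mono)
  qed
  also have "\<dots> \<le> (1 - t) * cosh (sqrt ((l * (r - c))\<^sup>2)) + t * cosh (sqrt ((l * (r + c))\<^sup>2))"
    unfolding chord using t by (intro convex_onD[OF convex_on_cosh_sqrt]) auto
  also have "\<dots> = cosh (l * r) * cosh (l * c) + (2 * t - 1) * (sinh (l * r) * sinh (l * c))"
    by (simp add: algebra_simps cosh_add cosh_diff)
  also have "2 * t - 1 = p / (r * c)"
    using r c by (simp add: t_def field_simps)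
  finally show ?thesis
    by (simp add: cosh_norm_slope_def r_def p_def ac_simps)
qed

lemma norm_cosh_norm_slope_le:
  fixes s :: "'b::real_inner"
  assumes s: "norm s \<le> R" and c: "0 < c" and l: "0 \<le> l"
  shows "norm (cosh_norm_slope l c s) \<le> sinh (l * R) * sinh (l * c) / c"
proof (cases "s = 0")
  case True
  then show ?thesis
    using assms norm_ge_zero[of s] by (simp add: cosh_norm_slope_def)
next
  case False
  have "sinh (l * norm s) * sinh (l * c) \<le> sinh (l * R) * sinh (l * c)"
    using assms by (intro mult_right_mono) (auto simp: mult_left_mono)
  then show ?thesis
    using False assms by (simp add: cosh_norm_slope_def abs_mult divide_right_mono)
qed

lemma borel_measurable_sinh_real[measurable]: "(sinh :: real \<Rightarrow> real) \<in> borel_measurable borel"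
  by (intro borel_measurable_continuous_onI continuous_at_imp_continuous_on ballI isCont_sinh)

lemma borel_measurable_cosh_real[measurable]: "(cosh :: real \<Rightarrow> real) \<in> borel_measurable borel"
  by (intro borel_measurable_continuous_onI continuous_at_imp_continuous_on ballI isCont_cosh)

lemma borel_measurable_cosh_norm_slope[measurable]:
  "(cosh_norm_slope l c :: 'b::euclidean_space \<Rightarrow> 'b) \<in> borel_measurable borel"
  unfolding cosh_norm_slope_def by measurable

lemma (in finite_measure) integrable_cosh_norm:
  fixes S :: "'a \<Rightarrow> 'b::euclidean_space"
  assumes [measurable]: "S \<in> borel_measurable M"
    and S: "AE \<omega> in M. norm (S \<omega>) \<le> R" and l: "0 \<le> l"
  shows "integrable M (\<lambda>\<omega>. cosh (l * norm (S \<omega>)))"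
proof (rule integrable_const_bound)
  show "AE \<omega> in M. norm (cosh (l * norm (S \<omega>))) \<le> cosh (l * R)"
    using S
  proof eventually_elim
    case (elim \<omega>)
    then have "l * norm (S \<omega>) \<le> l * R"
      using l by (rule mult_left_mono)
    moreover have "0 \<le> l * norm (S \<omega>)"
      using l by simp
    ultimately show ?case
      by (simp add: cosh_real_nonneg_le_iff)
  qed
qed measurable

lemma (in prob_space)
  fixes S X :: "'a \<Rightarrow> 'b::euclidean_space"
  assumes ind: "indep_var borel S borel X"
    and [measurable]: "S \<in> borel_measurable M" "X \<in> borel_measurable M" "F \<in> borel_measurable borel"
    and FS: "AE \<omega> in M. norm (F (S \<omega>)) \<le> B" and X: "integrable M X" and X0: "integral\<^sup>L M X = 0"
  shows integrable_inner_indep: "integrable M (\<lambda>\<omega>. F (S \<omega>) \<bullet> X \<omega>)"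
    and integral_inner_indep_centred: "(\<integral>\<omega>. F (S \<omega>) \<bullet> X \<omega> \<partial>M) = 0"
proof -
  have ind_coord: "indep_var borel (\<lambda>\<omega>. F (S \<omega>) \<bullet> b) borel (\<lambda>\<omega>. X \<omega> \<bullet> b)" for b :: 'b
    by (rule indep_var_compose[unfolded comp_def, OF ind]) measurable
  have int_coord: "integrable M (\<lambda>\<omega>. F (S \<omega>) \<bullet> b)" for b :: 'b
  proof (rule integrable_const_bound)
    show "AE \<omega> in M. norm (F (S \<omega>) \<bullet> b) \<le> B * norm b"
      using FS
    proof eventually_elim
      case (elim \<omega>)
      have "norm (F (S \<omega>) \<bullet> b) \<le> norm (F (S \<omega>)) * norm b"
        using Cauchy_Schwarz_ineq2 by simp
      also have "\<dots> \<le> B * norm b"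
        using elim by (rule mult_right_mono) simp
      finally show ?case .
    qed
  qed measurable
  have int_prod: "integrable M (\<lambda>\<omega>. (F (S \<omega>) \<bullet> b) * (X \<omega> \<bullet> b))" for b :: 'b
    using X by (intro indep_var_integrable[OF ind_coord int_coord integrable_inner_left])
  have integral_prod: "(\<integral>\<omega>. (F (S \<omega>) \<bullet> b) * (X \<omega> \<bullet> b) \<partial>M) = 0" for b :: 'b
    using X X0 by (simp add: indep_var_lebesgue_integral[OF ind_coord int_coord integrable_inner_left])
  have inner_eq: "F (S \<omega>) \<bullet> X \<omega> = (\<Sum>b\<in>Basis. (F (S \<omega>) \<bullet> b) * (X \<omega> \<bullet> b))" for \<omega>
    by (rule euclidean_inner)
  show "integrable M (\<lambda>\<omega>. F (S \<omega>) \<bullet> X \<omega>)"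
    unfolding inner_eq by (intro Bochner_Integration.integrable_sum int_prod)
  show "(\<integral>\<omega>. F (S \<omega>) \<bullet> X \<omega> \<partial>M) = 0"
    unfolding inner_eq by (subst Bochner_Integration.integral_sum) (auto intro: int_prod simp: integral_prod)
qed

lemma (in prob_space) integral_cosh_norm_add_indep_le:
  fixes S X :: "'a \<Rightarrow> 'b::euclidean_space"
  assumes ind: "indep_var borel S borel X"
    and S_meas[measurable]: "S \<in> borel_measurable M" and X_meas[measurable]: "X \<in> borel_measurable M"
    and S: "AE \<omega> in M. norm (S \<omega>) \<le> R" and X: "AE \<omega> in M. norm (X \<omega>) \<le> c"
    and X0: "integral\<^sup>L M X = 0" and c: "0 < c" and l: "0 \<le> l"
  shows "(\<integral>\<omega>. cosh (l * norm (S \<omega> + X \<omega>)) \<partial>M) \<le> cosh (l * c) * (\<integral>\<omega>. cosh (l * norm (S \<omega>)) \<partial>M)"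
proof -
  have int_X: "integrable M X"
    by (rule integrable_const_bound[OF X]) simp
  have norm_add: "AE \<omega> in M. norm (S \<omega> + X \<omega>) \<le> R + c"
    using S X by eventually_elim (meson add_mono norm_triangle_ineq order_trans)
  have slope_bound: "AE \<omega> in M. norm (cosh_norm_slope l c (S \<omega>)) \<le> sinh (l * R) * sinh (l * c) / c"
    using S by eventually_elim (use c l norm_cosh_norm_slope_le in auto)
  note int_slope =
    integrable_inner_indep[OF ind S_meas X_meas borel_measurable_cosh_norm_slope slope_bound int_X X0]
  note integral_slope =
    integral_inner_indep_centred[OF ind S_meas X_meas borel_measurable_cosh_norm_slope slope_bound int_X X0]
  have "(\<integral>\<omega>. cosh (l * norm (S \<omega> + X \<omega>)) \<partial>M) \<le>
      (\<integral>\<omega>. cosh (l * c) * cosh (l * norm (S \<omega>)) + cosh_norm_slope l c (S \<omega>) \<bullet> X \<omega> \<partial>M)"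
  proof (rule integral_mono_AE)
    show "AE \<omega> in M. cosh (l * norm (S \<omega> + X \<omega>)) \<le>
        cosh (l * c) * cosh (l * norm (S \<omega>)) + cosh_norm_slope l c (S \<omega>) \<bullet> X \<omega>"
      using X by eventually_elim (use cosh_norm_add_le c l in \<open>auto simp: mult.commute\<close>)
  qed (use l norm_add S in
      \<open>auto intro!: integrable_cosh_norm int_slope Bochner_Integration.integrable_add\<close>)
  also have "\<dots> = cosh (l * c) * (\<integral>\<omega>. cosh (l * norm (S \<omega>)) \<partial>M)"
    using l S by (subst Bochner_Integration.integral_add)
      (auto intro!: integrable_cosh_norm int_slope simp: integral_slope)
  finally show ?thesis .
qed

lemma (in prob_space) indep_var_sum_insert:
  fixes X :: "'i \<Rightarrow> 'a \<Rightarrow> 'b::euclidean_space"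
  assumes "finite I" "i \<notin> I" and indep: "indep_vars (\<lambda>_. borel) X (insert i I)"
  shows "indep_var borel (\<lambda>\<omega>. \<Sum>j\<in>I. X j \<omega>) borel (X i)"
proof -
  have "indep_var
      borel ((\<lambda>f. \<Sum>j\<in>I. f j) \<circ> (\<lambda>\<omega>. restrict (\<lambda>j. X j \<omega>) I))
      borel ((\<lambda>f. f i) \<circ> (\<lambda>\<omega>. restrict (\<lambda>j. X j \<omega>) {i}))"
    using assms by (intro indep_var_compose[OF indep_var_restrict[OF indep]]) auto
  also have "(\<lambda>f. \<Sum>j\<in>I. f j) \<circ> (\<lambda>\<omega>. restrict (\<lambda>j. X j \<omega>) I) = (\<lambda>\<omega>. \<Sum>j\<in>I. X j \<omega>)"
    by (auto cong: sum.cong)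
  also have "(\<lambda>f. f i) \<circ> (\<lambda>\<omega>. restrict (\<lambda>j. X j \<omega>) {i}) = X i"
    by auto
  finally show ?thesis .
qed

lemma AE_norm_sum_le:
  fixes X :: "'i \<Rightarrow> 'a \<Rightarrow> 'b::real_normed_vector" and H :: real
  assumes "finite I" and "\<And>i. i \<in> I \<Longrightarrow> AE \<omega> in M. norm (X i \<omega>) \<le> H"
  shows "AE \<omega> in M. norm (\<Sum>i\<in>I. X i \<omega>) \<le> card I * H"
proof -
  have "AE \<omega> in M. \<forall>i\<in>I. norm (X i \<omega>) \<le> H"
    using assms by (rule AE_finite_allI)
  then show ?thesis
  proof eventually_elim
    case (elim \<omega>)
    have "norm (\<Sum>i\<in>I. X i \<omega>) \<le> (\<Sum>i\<in>I. norm (X i \<omega>))"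
      by (rule norm_sum)
    also have "\<dots> \<le> card I * H"
      using elim sum_bounded_above[of I "\<lambda>i. norm (X i \<omega>)" H] by simp
    finally show ?case .
  qed
qed

lemma (in prob_space) integral_cosh_norm_sum_le:
  fixes X :: "'i \<Rightarrow> 'a \<Rightarrow> 'b::euclidean_space"
  assumes "finite I" and indep: "indep_vars (\<lambda>_. borel) X I"
    and bounded: "\<And>i. i \<in> I \<Longrightarrow> AE \<omega> in M. norm (X i \<omega>) \<le> H"
    and centred: "\<And>i. i \<in> I \<Longrightarrow> integral\<^sup>L M (X i) = 0"
    and H: "0 < H" and l: "0 \<le> l"
  shows "(\<integral>\<omega>. cosh (l * norm (\<Sum>i\<in>I. X i \<omega>)) \<partial>M) \<le> cosh (l * H) ^ card I"
  using assms(1-4)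
proof (induction I rule: finite_induct)
  case empty
  then show ?case
    by (simp add: prob_space)
next
  case (insert i I)
  have [measurable]: "X j \<in> borel_measurable M" if "j \<in> insert i I" for j
    using insert.prems(1) that unfolding indep_vars_def2 by blast
  have "(\<integral>\<omega>. cosh (l * norm (\<Sum>j\<in>insert i I. X j \<omega>)) \<partial>M)
      = (\<integral>\<omega>. cosh (l * norm ((\<Sum>j\<in>I. X j \<omega>) + X i \<omega>)) \<partial>M)"
    using insert.hyps by (simp add: add.commute)
  also have "\<dots> \<le> cosh (l * H) * (\<integral>\<omega>. cosh (l * norm (\<Sum>j\<in>I. X j \<omega>)) \<partial>M)"
    using insert H l
    by (intro integral_cosh_norm_add_indep_le[where R = "card I * H"] indep_var_sum_insert AE_norm_sum_le) auto
  also have "\<dots> \<le> cosh (l * H) * cosh (l * H) ^ card I"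
    using insert by (intro mult_left_mono insert.IH) (auto intro: indep_vars_subset)
  also have "\<dots> = cosh (l * H) ^ card (insert i I)"
    using insert.hyps by simp
  finally show ?case .
qed

lemma (in prob_space) prob_norm_sum_gt_le:
  fixes X :: "'i \<Rightarrow> 'a \<Rightarrow> 'b::euclidean_space" and H t :: real
  assumes "finite I" and indep: "indep_vars (\<lambda>_. borel) X I"
    and bounded: "\<And>i. i \<in> I \<Longrightarrow> AE \<omega> in M. norm (X i \<omega>) \<le> H"
    and centred: "\<And>i. i \<in> I \<Longrightarrow> integral\<^sup>L M (X i) = 0"
    and H: "0 < H" and t: "0 \<le> t"
  shows "prob {\<omega> \<in> space M. t < norm (\<Sum>i\<in>I. X i \<omega>)} \<le> 2 * exp (- t\<^sup>2 / (2 * card I * H\<^sup>2))"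
proof (cases "I = {}")
  case True
  then show ?thesis
    using t by simp
next
  case False
  define n where "n = real (card I)"
  define l where "l = t / (n * H\<^sup>2)"
  have n: "0 < n"
    using False \<open>finite I\<close> by (simp add: n_def card_gt_0_iff)
  have l: "0 \<le> l"
    using t n H by (simp add: l_def)
  have sum_meas[measurable]: "(\<lambda>\<omega>. \<Sum>i\<in>I. X i \<omega>) \<in> borel_measurable M"
    using indep unfolding indep_vars_def2 by (auto intro: borel_measurable_sum)
  have int: "integrable M (\<lambda>\<omega>. cosh (l * norm (\<Sum>i\<in>I. X i \<omega>)))"
    using l by (intro integrable_cosh_norm[where R = "card I * H"] AE_norm_sum_le sum_meas bounded \<open>finite I\<close>)
  have mgf: "(\<integral>\<omega>. cosh (l * norm (\<Sum>i\<in>I. X i \<omega>)) \<partial>M) \<le> exp (n * (l * H)\<^sup>2 / 2)"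
  proof -
    have "(\<integral>\<omega>. cosh (l * norm (\<Sum>i\<in>I. X i \<omega>)) \<partial>M) \<le> cosh (l * H) ^ card I"
      by (rule integral_cosh_norm_sum_le[OF assms(1-5) l])
    also have "\<dots> \<le> exp ((l * H)\<^sup>2 / 2) ^ card I"
      by (intro power_mono cosh_le_exp_square_half) (simp add: less_imp_le)
    also have "\<dots> = exp (n * (l * H)\<^sup>2 / 2)"
      by (simp add: n_def exp_of_nat_mult[symmetric])
    finally show ?thesis .
  qed
  have "prob {\<omega> \<in> space M. t < norm (\<Sum>i\<in>I. X i \<omega>)}
      \<le> prob {\<omega> \<in> space M. cosh (l * t) \<le> cosh (l * norm (\<Sum>i\<in>I. X i \<omega>))}"
    using l t by (intro finite_measure_mono) (auto simp: cosh_real_nonneg_le_iff mult_left_mono)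
  also have "\<dots> \<le> (\<integral>\<omega>. cosh (l * norm (\<Sum>i\<in>I. X i \<omega>)) \<partial>M) / cosh (l * t)"
    by (rule integral_Markov_inequality_measure[OF int, where A = "space M"]) auto
  also have "\<dots> \<le> exp (n * (l * H)\<^sup>2 / 2) / (exp (l * t) / 2)"
    using mgf by (intro frac_le) (auto simp: cosh_def)
  also have "\<dots> = 2 * exp (n * (l * H)\<^sup>2 / 2 - l * t)"
    by (simp add: exp_diff)
  also have "n * (l * H)\<^sup>2 / 2 - l * t = - t\<^sup>2 / (2 * card I * H\<^sup>2)"
    using n H by (simp add: l_def n_def field_simps power2_eq_square)
  finally show ?thesis .
qed

lemma sum_power2_norm_diff_split_mean:
  fixes v :: "'i \<Rightarrow> 'b::real_inner"
  assumes "finite A" "A \<noteq> {}"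
  shows "(\<Sum>i\<in>A. (norm (v i - \<nu>))\<^sup>2) =
    (\<Sum>i\<in>A. (norm (v i - (1 / real (card A)) *\<^sub>R (\<Sum>j\<in>A. v j)))\<^sup>2)
    + (norm (\<Sum>i\<in>A. v i - \<nu>))\<^sup>2 / real (card A)"
proof -
  define N where "N = real (card A)"
  define m where "m = (1 / N) *\<^sub>R (\<Sum>j\<in>A. v j)"
  have N: "0 < N"
    using assms by (simp add: N_def card_gt_0_iff)
  have Nm: "N *\<^sub>R m = (\<Sum>j\<in>A. v j)"
    using N by (simp add: m_def)
  have sum_dev: "(\<Sum>i\<in>A. v i - m) = 0"
    using Nm by (simp add: sum_subtractf N_def sum_constant_scaleR)
  have sum_shift: "(\<Sum>i\<in>A. v i - \<nu>) = N *\<^sub>R (m - \<nu>)"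
    using Nm by (simp add: sum_subtractf N_def scaleR_diff_right sum_constant_scaleR)
  have each: "(norm (v i - \<nu>))\<^sup>2 = (norm (v i - m))\<^sup>2 + 2 * ((v i - m) \<bullet> (m - \<nu>)) + (norm (m - \<nu>))\<^sup>2" for i
  proof -
    have "(norm (v i - \<nu>))\<^sup>2 = (norm ((v i - m) + (m - \<nu>)))\<^sup>2"
      by simp
    then show ?thesis
      by (simp only: power2_norm_eq_inner inner_add_left inner_add_right inner_commute[of "m - \<nu>" "v i - m"])
  qed
  have "(\<Sum>i\<in>A. (norm (v i - \<nu>))\<^sup>2)
      = (\<Sum>i\<in>A. (norm (v i - m))\<^sup>2) + 2 * ((\<Sum>i\<in>A. v i - m) \<bullet> (m - \<nu>)) + N * (norm (m - \<nu>))\<^sup>2"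
    by (simp add: each sum.distrib inner_sum_left sum_distrib_left N_def)
  also have "\<dots> = (\<Sum>i\<in>A. (norm (v i - m))\<^sup>2) + (norm (\<Sum>i\<in>A. v i - \<nu>))\<^sup>2 / N"
    using N by (simp add: sum_dev sum_shift power2_eq_square)
  finally show ?thesis
    by (simp add: m_def N_def)
qed

lemma sum_power2_norm_diff_le_mean:
  fixes v :: "'i \<Rightarrow> 'b::real_inner"
  assumes "finite A" "A \<noteq> {}" and "norm (\<Sum>i\<in>A. v i - \<nu>) \<le> t"
  shows "(\<Sum>i\<in>A. (norm (v i - \<nu>))\<^sup>2) \<le>
    (\<Sum>i\<in>A. (norm (v i - (1 / real (card A)) *\<^sub>R (\<Sum>j\<in>A. v j)))\<^sup>2) + t\<^sup>2 / real (card A)"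
proof -
  have "(norm (\<Sum>i\<in>A. v i - \<nu>))\<^sup>2 \<le> t\<^sup>2"
    using assms(3) by (intro power_mono) auto
  then show ?thesis
    using sum_power2_norm_diff_split_mean[OF assms(1,2), of v \<nu>] by (simp add: divide_right_mono)
qed

lemma (in finite_measure) integrable_of_AE_norm_diff_le:
  fixes f :: "'a \<Rightarrow> 'b::{banach, second_countable_topology}"
  assumes [measurable]: "f \<in> borel_measurable M" and "AE \<omega> in M. norm (f \<omega> - c) \<le> B"
  shows "integrable M f"
proof -
  have "integrable M (\<lambda>\<omega>. f \<omega> - c)"
    using assms(2) by (rule integrable_const_bound) measurable
  then have "integrable M (\<lambda>\<omega>. (f \<omega> - c) + c)"
    by (rule Bochner_Integration.integrable_add) simp
  then show ?thesis
    by simp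
qed

lemma (in prob_space) prob_sum_power2_norm_diff_mean_le:
  fixes V :: "'i \<Rightarrow> 'a \<Rightarrow> 'b::euclidean_space" and H \<delta> :: real
  assumes "finite I" "I \<noteq> {}" and indep: "indep_vars (\<lambda>_. borel) V I"
    and bounded: "\<And>i. i \<in> I \<Longrightarrow> AE \<omega> in M. norm (V i \<omega> - \<nu>) \<le> H"
    and mean: "\<And>i. i \<in> I \<Longrightarrow> integral\<^sup>L M (V i) = \<nu>"
    and H: "0 < H" and \<delta>: "0 < \<delta>" "\<delta> < 1"
  shows "1 - \<delta> \<le> prob {\<omega> \<in> space M.
    (\<Sum>i\<in>I. (norm (V i \<omega> - \<nu>))\<^sup>2)
    \<le> (\<Sum>i\<in>I. (norm (V i \<omega> - (1 / real (card I)) *\<^sub>R (\<Sum>j\<in>I. V j \<omega>)))\<^sup>2) + 2 * H\<^sup>2 * ln (2 / \<delta>)}"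
    (is "_ \<le> prob ?good")
proof -
  define t where "t = sqrt (2 * real (card I) * H\<^sup>2 * ln (2 / \<delta>))"
  let ?bad = "{\<omega> \<in> space M. t < norm (\<Sum>i\<in>I. V i \<omega> - \<nu>)}"
  have [measurable]: "V i \<in> borel_measurable M" if "i \<in> I" for i
    using indep that unfolding indep_vars_def2 by blast
  have centred: "integral\<^sup>L M (\<lambda>\<omega>. V i \<omega> - \<nu>) = 0" if "i \<in> I" for i
  proof -
    have "integrable M (V i)"
      using that bounded by (intro integrable_of_AE_norm_diff_le) auto
    then show ?thesis
      using that mean by (simp add: prob_space)
  qed
  have indep_centred: "indep_vars (\<lambda>_. borel) (\<lambda>i \<omega>. V i \<omega> - \<nu>) I"
    by (rule indep_vars_compose2[OF indep, of "\<lambda>_ v. v - \<nu>"]) measurable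
  have L: "0 < ln (2 / \<delta>)"
    using \<delta> by simp
  have t2: "t\<^sup>2 = 2 * real (card I) * H\<^sup>2 * ln (2 / \<delta>)"
    using L by (simp add: t_def)
  have "prob ?bad \<le> 2 * exp (- t\<^sup>2 / (2 * card I * H\<^sup>2))"
    using assms(1) L H by (intro prob_norm_sum_gt_le[OF _ indep_centred bounded centred]) (auto simp: t_def)
  also have "\<dots> = \<delta>"
    using assms(1,2) H \<delta> by (simp add: t2 exp_minus)
  finally have "1 - \<delta> \<le> prob (space M - ?bad)"
    by (subst prob_compl) measurable
  also have "\<dots> \<le> prob ?good"
  proof (rule finite_measure_mono)
    have "t\<^sup>2 / real (card I) = 2 * H\<^sup>2 * ln (2 / \<delta>)"
      using assms(1,2) by (simp add: t2)
    then show "space M - ?bad \<subseteq> ?good"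
      using sum_power2_norm_diff_le_mean[OF assms(1,2), of _ \<nu> t] by (auto simp: not_less)
  qed measurable
  finally show ?thesis .
qed

theorem lemma12:
  fixes M :: "'a measure" and V :: "nat \<Rightarrow> 'a \<Rightarrow> 'b::euclidean_space"
    and n :: nat and H \<delta> :: real
  assumes "prob_space M"
    and rv: "\<And>i. i \<in> {1..n} \<Longrightarrow> V i \<in> borel_measurable M"
    and indep: "prob_space.indep_vars M (\<lambda>_. borel) V {1..n}"
    and ident: "\<And>i. i \<in> {1..n} \<Longrightarrow> distr M borel (V i) = distr M borel (V 1)"
    and n: "n \<ge> 1"
    and H: "H > 0"
    and bound: "\<And>i. i \<in> {1..n} \<Longrightarrow>
                  (AE \<omega> in M. norm (V i \<omega> - integral\<^sup>L M (V i)) \<le> H)"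
    and \<delta>: "0 < \<delta>" "\<delta> < 1"
  shows "measure M {\<omega> \<in> space M.
            (\<Sum>i\<in>{1..n}. (norm (V i \<omega> - integral\<^sup>L M (V 1)))\<^sup>2)
            \<le> (\<Sum>i\<in>{1..n}. (norm (V i \<omega> - (1 / real n) *\<^sub>R (\<Sum>j\<in>{1..n}. V j \<omega>)))\<^sup>2)
               + 2 * H\<^sup>2 * ln (2 / \<delta>)} \<ge> 1 - \<delta>"
proof -
  interpret prob_space M by fact
  have mean: "integral\<^sup>L M (V i) = integral\<^sup>L M (V 1)" if i: "i \<in> {1..n}" for i
  proof -
    have "integral\<^sup>L M (V i) = integral\<^sup>L (distr M borel (V i)) (\<lambda>x. x)"
      using rv[OF i] by (simp add: integral_distr)
    also have "\<dots> = integral\<^sup>L M (V 1)"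
      using ident[OF i] rv[of 1] n by (simp add: integral_distr)
    finally show ?thesis .
  qed
  have bounded: "AE \<omega> in M. norm (V i \<omega> - integral\<^sup>L M (V 1)) \<le> H" if "i \<in> {1..n}" for i
    using bound[OF that] mean[OF that] by simp
  have "1 - \<delta> \<le> prob {\<omega> \<in> space M.
      (\<Sum>i\<in>{1..n}. (norm (V i \<omega> - integral\<^sup>L M (V 1)))\<^sup>2)
      \<le> (\<Sum>i\<in>{1..n}. (norm (V i \<omega> - (1 / real (card {1..n})) *\<^sub>R (\<Sum>j\<in>{1..n}. V j \<omega>)))\<^sup>2)
         + 2 * H\<^sup>2 * ln (2 / \<delta>)}"
    using n by (intro prob_sum_power2_norm_diff_mean_le[OF _ _ indep bounded mean H \<delta>]) auto
  then show ?thesis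
    by simp
qed

end
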